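(* Let $A$ be a sparse matrix whose columns are partitioned into consecutive groups $Q_1,\dots,Q_K$, each of width at most $\Delta_W$ (a regular partition of width $\Delta_W$). Let $\tau\in(0,1]$. Let $G$ consist of rows $v_0,\dots,v_{h-1}$ of $A$, merged into one group by the 1-SA algorithm in this order using Jaccard similarity threshold $\tau$; that is, writing $\hat V_i\subseteq\{1,\dots,K\}$ for the support of the quotient row $\hat v_i$ and $P_{i}=\hat V_0\cup\dots\cup \hat V_i$, we have $\mathrm{jaccard}(P_{i-1},\hat V_i)=|P_{i-1}\cap \hat V_i|/|P_{i-1}\cup \hat V_i|\ge\tau$ for every $1\le i\le h-1$. Let $\lambda_0=|\hat V_0|$ be the number of nonzeros of the (quotient) first row and $\lambda=|P_{h-1}|$ the number of nonzeros of the final pattern. If $\lambda\le \lambda_0/(1-\tau/2)$, then the density $\rho_G$ of $G$ after removing empty columns is at least $\tau/(2\Delta_W)$.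
   Context: Quotient row: given the column partition $Q=\{Q_1,\dots,Q_K\}$, the $Q$-quotient of a row $v$ is the binary vector $\hat v\in\{0,1\}^K$ with $\hat v_j=1$ iff $v$ has at least one nonzero entry in a column of $Q_j$. The 1-SA algorithm processes rows in order; when it meets a row not yet assigned to a group it opens a new group whose pattern is that row's quotient; it then scans later unassigned rows and, whenever the merge condition holds between the current pattern and a row's quotient, assigns the row to the group and replaces the pattern by the bitwise OR of the pattern and the row's quotient. Here the merge condition includes that the Jaccard similarity (of supports) between the current pattern and the new quotient row is at least $\tau$. Density of $G$ after removing empty columns: let $C$ be the union of the column groups $Q_j$ with $j\in P_{h-1}$; $\rho_G$ is the number of nonzero entries of $A$ in rows $v_0,\dots,v_{h-1}$ and columns in $C$, divided by $h\cdot|C|$. (For $\Delta_W=1$ this is the density of the $h\times\lambda$ submatrix on the columns containing at least one nonzero of the group.) *)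

theory Defs
  imports Complex_Main
begin

definition consecutive_partition :: "nat \<Rightarrow> nat \<Rightarrow> nat \<Rightarrow> (nat \<Rightarrow> nat) \<Rightarrow> bool" where
  "consecutive_partition n K W b \<longleftrightarrow>
     b 0 = 0 \<and> b K = n \<and> (\<forall>j<K. b j < b (Suc j) \<and> b (Suc j) - b j \<le> W)"

definition colgroup :: "(nat \<Rightarrow> nat) \<Rightarrow> nat \<Rightarrow> nat set" where
  "colgroup b j = {b j ..< b (Suc j)}"

definition quot_supp :: "nat \<Rightarrow> (nat \<Rightarrow> nat) \<Rightarrow> (nat \<Rightarrow> real) \<Rightarrow> nat set" where
  "quot_supp K b row = {j. j < K \<and> (\<exists>c\<in>colgroup b j. row c \<noteq> 0)}"

definition jaccard :: "nat set \<Rightarrow> nat set \<Rightarrow> real" where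
  "jaccard X Y = real (card (X \<inter> Y)) / real (card (X \<union> Y))"

definition pattern :: "nat \<Rightarrow> (nat \<Rightarrow> nat) \<Rightarrow> (nat \<Rightarrow> nat \<Rightarrow> real) \<Rightarrow> nat \<Rightarrow> nat set" where
  "pattern K b v i = (\<Union>k\<le>i. quot_supp K b (v k))"

text \<open>Columns of the group G (rows v 0..v (h-1)) after removing empty columns.\<close>
definition group_cols :: "nat \<Rightarrow> (nat \<Rightarrow> nat) \<Rightarrow> (nat \<Rightarrow> nat \<Rightarrow> real) \<Rightarrow> nat \<Rightarrow> nat set" where
  "group_cols K b v h = (\<Union>j\<in>pattern K b v (h - 1). colgroup b j)"

definition group_density :: "nat \<Rightarrow> (nat \<Rightarrow> nat) \<Rightarrow> (nat \<Rightarrow> nat \<Rightarrow> real) \<Rightarrow> nat \<Rightarrow> real" where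
  "group_density K b v h =
     real (card {(i, c). i < h \<and> c \<in> group_cols K b v h \<and> v i c \<noteq> 0})
     / (real h * real (card (group_cols K b v h)))"

end

theory Submission
  imports Defs
begin

(* Write L for the size of the final pattern and V_i for the quotient support of the i-th row.
   The first row alone has |V_0| >= (1 - tau/2) L >= L/2, and every later pattern contains
   V_0, so the Jaccard condition forces |V_i| >= tau |V_0| >= tau L / 2 for every row.
   Distinct column groups are disjoint, so such a row has at least |V_i| nonzeros among the
   group's columns, of which there are at most W L.  Hence the h x (at most W L) submatrix
   carries at least h tau L / 2 nonzeros.  Neither the order of the rows nor the number of
   columns of A enters the argument. *)

lemma consecutive_partition_le:
  assumes part: "consecutive_partition n K W b" and "j < j'" "j' \<le> K"
  shows "b (Suc j) \<le> b j'"
proof -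
  have "Suc j \<le> j'" using \<open>j < j'\<close> by simp
  then show ?thesis
    using \<open>j' \<le> K\<close>
  proof (induction rule: dec_induct)
    case (step i)
    then have "b i < b (Suc i)" using part unfolding consecutive_partition_def by auto
    with step show ?case by simp
  qed simp
qed

lemma colgroup_disjoint:
  assumes part: "consecutive_partition n K W b" and "j < K" "j' < K" "j \<noteq> j'"
  shows "colgroup b j \<inter> colgroup b j' = {}"
proof -
  have "colgroup b j \<inter> colgroup b j' = {}" if "j < j'" "j' < K" for j j'
    using consecutive_partition_le[OF part that(1)] that(2) unfolding colgroup_def by auto
  then show ?thesis
    using assms(2-4) by (metis Int_commute linorder_neqE_nat)
qed

lemma card_colgroup_le:
  assumes "consecutive_partition n K W b" "j < K"
  shows "card (colgroup b j) \<le> W"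
  using assms unfolding consecutive_partition_def colgroup_def by auto

lemma colgroup_nonempty:
  assumes "consecutive_partition n K W b" "j < K"
  shows "colgroup b j \<noteq> {}"
  using assms unfolding consecutive_partition_def colgroup_def by auto

lemma quot_supp_subset: "quot_supp K b row \<subseteq> {..<K}"
  unfolding quot_supp_def by auto

lemma card_quot_supp_le_card_nonzeros:
  assumes part: "consecutive_partition n K W b"
    and cols: "(\<Union>j\<in>quot_supp K b row. colgroup b j) \<subseteq> C" and "finite C"
  shows "card (quot_supp K b row) \<le> card {c \<in> C. row c \<noteq> 0}"
proof -
  define pick where "pick j = (SOME c. c \<in> colgroup b j \<and> row c \<noteq> 0)" for j
  have pick: "pick j \<in> colgroup b j" "row (pick j) \<noteq> 0" if "j \<in> quot_supp K b row" for j
    using someI_ex[of "\<lambda>c. c \<in> colgroup b j \<and> row c \<noteq> 0"] that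
    unfolding pick_def quot_supp_def by auto
  have "inj_on pick (quot_supp K b row)"
  proof (rule inj_onI, rule ccontr)
    fix j j' assume j: "j \<in> quot_supp K b row" and j': "j' \<in> quot_supp K b row"
      and "pick j = pick j'" "j \<noteq> j'"
    then have "pick j \<in> colgroup b j \<inter> colgroup b j'"
      using pick(1)[OF j] pick(1)[OF j'] by simp
    moreover have "j < K" "j' < K"
      using j j' quot_supp_subset by auto
    ultimately show False
      using colgroup_disjoint[OF part _ _ \<open>j \<noteq> j'\<close>] by blast
  qed
  moreover have "pick ` quot_supp K b row \<subseteq> {c \<in> C. row c \<noteq> 0}"
    using pick cols by blast
  ultimately show ?thesis
    using \<open>finite C\<close> by (intro card_inj_on_le) auto
qed

lemma card_UN_colgroup_le:
  assumes part: "consecutive_partition n K W b" and "J \<subseteq> {..<K}"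
  shows "card (\<Union>j\<in>J. colgroup b j) \<le> W * card J"
proof -
  have "finite J" using assms(2) finite_subset by blast
  then have "card (\<Union>j\<in>J. colgroup b j) \<le> (\<Sum>j\<in>J. card (colgroup b j))"
    by (rule card_UN_le)
  also have "\<dots> \<le> (\<Sum>j\<in>J. W)"
    using card_colgroup_le[OF part] assms(2) by (intro sum_mono) auto
  finally show ?thesis by (simp add: mult.commute)
qed

lemma finite_quot_supp: "finite (quot_supp K b row)"
  using finite_subset[OF quot_supp_subset] by blast

lemma pattern_subset: "pattern K b v i \<subseteq> {..<K}"
  unfolding pattern_def using quot_supp_subset by blast

lemma finite_group_cols: "finite (group_cols K b v h)"
  unfolding group_cols_def colgroup_def
  using finite_subset[OF pattern_subset] by auto

lemma quot_supp_subset_pattern: "i \<le> j \<Longrightarrow> quot_supp K b (v i) \<subseteq> pattern K b v j"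
  unfolding pattern_def by auto

lemma card_group_nonzeros_ge:
  assumes part: "consecutive_partition n K W b"
  shows "(\<Sum>i<h. card (quot_supp K b (v i)))
           \<le> card {(i, c). i < h \<and> c \<in> group_cols K b v h \<and> v i c \<noteq> 0}"
proof -
  let ?C = "group_cols K b v h"
  have "{(i, c). i < h \<and> c \<in> ?C \<and> v i c \<noteq> 0} = (SIGMA i:{..<h}. {c \<in> ?C. v i c \<noteq> 0})"
    by auto
  then have "card {(i, c). i < h \<and> c \<in> ?C \<and> v i c \<noteq> 0} = (\<Sum>i<h. card {c \<in> ?C. v i c \<noteq> 0})"
    using finite_group_cols by simp
  moreover have "card (quot_supp K b (v i)) \<le> card {c \<in> ?C. v i c \<noteq> 0}" if "i < h" for i
  proof (rule card_quot_supp_le_card_nonzeros[OF part _ finite_group_cols])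
    show "(\<Union>j\<in>quot_supp K b (v i). colgroup b j) \<subseteq> ?C"
      using quot_supp_subset_pattern[of i "h - 1" K b v] that unfolding group_cols_def by fastforce
  qed
  then have "(\<Sum>i<h. card (quot_supp K b (v i))) \<le> (\<Sum>i<h. card {c \<in> ?C. v i c \<noteq> 0})"
    by (intro sum_mono) simp
  ultimately show ?thesis
    by simp
qed

lemma jaccard_ge_imp_card_Int_ge:
  assumes "finite X" "finite Y" "0 < \<tau>" "\<tau> \<le> jaccard X Y"
  shows "\<tau> * card (X \<union> Y) \<le> card (X \<inter> Y)"
proof (cases "X \<union> Y = {}")
  case False
  then have "card (X \<union> Y) > 0" using assms(1,2) by (simp add: card_gt_0_iff)
  then show ?thesis using assms(4) unfolding jaccard_def by (simp add: field_simps)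
qed (use assms in \<open>simp add: jaccard_def\<close>)

lemma card_merged_ge_first:
  fixes V :: "nat \<Rightarrow> nat set" and \<tau> :: real
  assumes fin: "\<And>i. finite (V i)" and tau: "0 < \<tau>" "\<tau> \<le> 1"
    and merge: "\<And>i. i < l \<Longrightarrow> \<tau> \<le> jaccard (\<Union>k\<le>i. V k) (V (Suc i))"
    and "i \<le> l"
  shows "\<tau> * card (V 0) \<le> card (V i)"
proof (cases i)
  case 0
  then show ?thesis using tau by (simp add: mult_left_le_one_le)
next
  case (Suc j)
  let ?P = "\<Union>k\<le>j. V k"
  have "finite ?P" using fin by blast
  have "card (V 0) \<le> card (?P \<union> V i)"
    using \<open>finite ?P\<close> fin by (intro card_mono) auto
  then have "\<tau> * card (V 0) \<le> \<tau> * card (?P \<union> V i)"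
    using tau by simp
  also have "\<dots> \<le> card (?P \<inter> V i)"
    using jaccard_ge_imp_card_Int_ge[OF \<open>finite ?P\<close> fin tau(1)] merge Suc \<open>i \<le> l\<close> by simp
  also have "\<dots> \<le> card (V i)"
    using fin by (simp add: card_mono)
  finally show ?thesis .
qed

lemma card_merged_ge_half_pattern:
  fixes V :: "nat \<Rightarrow> nat set" and \<tau> :: real
  assumes fin: "\<And>i. finite (V i)" and tau: "0 < \<tau>" "\<tau> \<le> 1"
    and merge: "\<And>i. i < l \<Longrightarrow> \<tau> \<le> jaccard (\<Union>k\<le>i. V k) (V (Suc i))"
    and lam: "card (\<Union>k\<le>l. V k) \<le> card (V 0) / (1 - \<tau> / 2)"
    and "i \<le> l"
  shows "\<tau> / 2 * card (\<Union>k\<le>l. V k) \<le> card (V i)"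
proof -
  let ?L = "real (card (\<Union>k\<le>l. V k))"
  have "?L / 2 \<le> (1 - \<tau> / 2) * ?L"
    using tau mult_left_le_one_le[of ?L \<tau>] by (simp add: field_simps)
  also have "\<dots> \<le> card (V 0)"
    using lam tau by (simp add: field_simps)
  finally have "\<tau> / 2 * ?L \<le> \<tau> * card (V 0)"
    using tau by simp
  also have "\<dots> \<le> card (V i)"
    using card_merged_ge_first[OF fin tau merge \<open>i \<le> l\<close>] .
  finally show ?thesis .
qed

lemma card_group_cols_le:
  assumes "consecutive_partition n K W b"
  shows "card (group_cols K b v h) \<le> W * card (pattern K b v (h - 1))"
  unfolding group_cols_def by (rule card_UN_colgroup_le[OF assms pattern_subset])

lemma card_group_cols_pos:
  assumes part: "consecutive_partition n K W b" and "quot_supp K b (v 0) \<noteq> {}"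
  shows "0 < card (group_cols K b v h)"
proof -
  obtain j where j: "j \<in> quot_supp K b (v 0)"
    using assms(2) by blast
  have "j < K"
    using j quot_supp_subset by blast
  have "j \<in> pattern K b v (h - 1)" "colgroup b j \<noteq> {}"
    using j quot_supp_subset_pattern[of 0 "h - 1"] colgroup_nonempty[OF part \<open>j < K\<close>] by auto
  then have "group_cols K b v h \<noteq> {}"
    unfolding group_cols_def by blast
  then show ?thesis
    using finite_group_cols card_gt_0_iff by blast
qed

lemma group_density_ge:
  fixes \<alpha> :: real
  assumes part: "consecutive_partition n K W b" and "0 < h"
    and first: "quot_supp K b (v 0) \<noteq> {}"
    and rows: "\<And>i. i < h \<Longrightarrow> \<alpha> * card (pattern K b v (h - 1)) \<le> card (quot_supp K b (v i))"
  shows "\<alpha> / W \<le> group_density K b v h"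
proof -
  define C where "C = group_cols K b v h"
  define L where "L = card (pattern K b v (h - 1))"
  define N where "N = card {(i, c). i < h \<and> c \<in> C \<and> v i c \<noteq> 0}"
  have "real h * (\<alpha> * L) \<le> (\<Sum>i<h. real (card (quot_supp K b (v i))))"
    using sum_mono[of "{..<h}" "\<lambda>_. \<alpha> * L"] rows unfolding L_def by simp
  also have "\<dots> \<le> N"
    unfolding N_def C_def of_nat_sum[symmetric] of_nat_le_iff by (rule card_group_nonzeros_ge[OF part])
  finally have nonzeros: "real h * (\<alpha> * L) \<le> N" .
  have cols: "card C \<le> W * L" "0 < card C"
    unfolding C_def L_def
    using card_group_cols_le[OF part] card_group_cols_pos[where v = v and h = h, OF part first] .
  then have "W > 0" "L > 0"
    by (metis gr0I le_zero_eq mult_is_0 not_less)+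
  have "\<alpha> / W = real h * (\<alpha> * L) / (real h * (W * L))"
    using \<open>0 < h\<close> \<open>W > 0\<close> \<open>L > 0\<close> by (simp add: field_simps)
  also have "\<dots> \<le> N / (real h * card C)"
    using nonzeros \<open>0 < h\<close> cols by (intro frac_le) (auto simp flip: of_nat_mult)
  finally show ?thesis
    unfolding group_density_def N_def C_def .
qed

theorem theorem1:
  fixes A :: "nat \<Rightarrow> nat \<Rightarrow> real" and m n K W h :: nat
    and b r :: "nat \<Rightarrow> nat" and \<tau> :: real
  assumes matrix: "\<forall>i c. n \<le> c \<longrightarrow> A i c = 0"
    and part: "consecutive_partition n K W b"
    and tau: "0 < \<tau>" "\<tau> \<le> 1"
    and h: "1 \<le> h"
    and rows: "\<forall>i<h. r i < m" "\<forall>i. Suc i < h \<longrightarrow> r i < r (Suc i)"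
    and merge: "\<forall>i. 1 \<le> i \<and> i \<le> h - 1 \<longrightarrow>
       jaccard (pattern K b (\<lambda>k. A (r k)) (i - 1)) (quot_supp K b (A (r i))) \<ge> \<tau>"
    and nonempty: "quot_supp K b (A (r 0)) \<noteq> {}"
    and lam: "real (card (pattern K b (\<lambda>k. A (r k)) (h - 1)))
              \<le> real (card (quot_supp K b (A (r 0)))) / (1 - \<tau> / 2)"
  shows "group_density K b (\<lambda>k. A (r k)) h \<ge> \<tau> / (2 * real W)"
proof -
  define v where "v = (\<lambda>k. A (r k))"
  have rows_bound: "\<tau> / 2 * card (pattern K b v (h - 1)) \<le> card (quot_supp K b (v i))"
    if "i < h" for i
    unfolding pattern_def
  proof (rule card_merged_ge_half_pattern[OF finite_quot_supp tau])
    show "\<tau> \<le> jaccard (\<Union>k\<le>j. quot_supp K b (v k)) (quot_supp K b (v (Suc j)))"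
      if "j < h - 1" for j
      using merge[rule_format, of "Suc j"] that unfolding v_def pattern_def by simp
    show "card (\<Union>k\<le>h - 1. quot_supp K b (v k)) \<le> card (quot_supp K b (v 0)) / (1 - \<tau> / 2)"
      using lam unfolding v_def pattern_def by simp
  qed (use that in simp)
  have "\<tau> / 2 / W \<le> group_density K b v h"
    using group_density_ge[OF part _ _ rows_bound] h nonempty unfolding v_def by simp
  then show ?thesis
    unfolding v_def by simp
qed

end
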